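(* Let $T$ be a ditree, let $S_1,\dots,S_t$ be all the source sets and sink sets of $T$ that contain no leaf of $T$, and let $\mathcal{L}$ be the set of all leaves of $T$. Let $M=\mathcal{L}\cup\{s_1,\dots,s_t\}$ where $s_i\in S_i$ for each $i$ (so $M$ contains $\mathcal{L}$ and exactly one vertex from each $S_i$). Then $M$ is a minimum-size geodetic set of $T$.
   Context: All digraphs are finite, without loops or parallel arcs. The underlying undirected graph of a digraph is obtained by forgetting orientations and deleting parallel edges. A ditree is a digraph whose underlying undirected graph is a tree (it may contain $2$-cycles, i.e., pairs of opposite arcs $uv,vu$). A leaf is a vertex of degree $1$ in the underlying undirected graph. For $S\subseteq V(D)$, $N^-(S)$ (resp. $N^+(S)$) is the set of vertices outside $S$ having an arc to (resp. from) some vertex of $S$. A source set is a maximal strongly connected component $S$ with $N^-(S)\setminus S=\emptyset$; a sink set is a maximal strongly connected component $S$ with $N^+(S)\setminus S=\emptyset$. For vertices $u,v$, $I(u,v)$ is the set of vertices on some shortest directed path from $u$ to $v$; for $S\subseteq V(D)$, $I(S)=\bigcup_{u,v\in S}(I(u,v)\cup I(v,u))$. A geodetic set is a set $S$ with $I(S)=V(D)$. *)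

theory Defs
  imports Main
begin

text \<open>A digraph is given by a vertex set V and an arc set A (pairs (u,v) = arc u->v).\<close>

definition digraph :: "'a set \<Rightarrow> ('a \<times> 'a) set \<Rightarrow> bool" where
  "digraph V A \<longleftrightarrow> finite V \<and> A \<subseteq> V \<times> V \<and> (\<forall>v. (v, v) \<notin> A)"

definition uadj :: "('a \<times> 'a) set \<Rightarrow> 'a \<Rightarrow> 'a \<Rightarrow> bool" where
  "uadj A u v \<longleftrightarrow> (u, v) \<in> A \<or> (v, u) \<in> A"

definition uconnected :: "'a set \<Rightarrow> ('a \<times> 'a) set \<Rightarrow> bool" where
  "uconnected V A \<longleftrightarrow> (\<forall>u\<in>V. \<forall>v\<in>V. (u, v) \<in> {(x, y). uadj A x y}\<^sup>*)"

definition ucycle :: "'a set \<Rightarrow> ('a \<times> 'a) set \<Rightarrow> 'a list \<Rightarrow> bool" where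
  "ucycle V A c \<longleftrightarrow> length c \<ge> 3 \<and> distinct c \<and> set c \<subseteq> V \<and>
     (\<forall>i < length c. uadj A (c ! i) (c ! ((i + 1) mod length c)))"

definition ditree :: "'a set \<Rightarrow> ('a \<times> 'a) set \<Rightarrow> bool" where
  "ditree V A \<longleftrightarrow> digraph V A \<and> V \<noteq> {} \<and> uconnected V A \<and> (\<nexists>c. ucycle V A c)"

definition leaf :: "'a set \<Rightarrow> ('a \<times> 'a) set \<Rightarrow> 'a \<Rightarrow> bool" where
  "leaf V A v \<longleftrightarrow> v \<in> V \<and> card {w \<in> V. uadj A v w} = 1"

definition leaves :: "'a set \<Rightarrow> ('a \<times> 'a) set \<Rightarrow> 'a set" where
  "leaves V A = {v. leaf V A v}"

definition in_nbhd :: "'a set \<Rightarrow> ('a \<times> 'a) set \<Rightarrow> 'a set \<Rightarrow> 'a set" where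
  "in_nbhd V A S = {x \<in> V - S. \<exists>y\<in>S. (x, y) \<in> A}"

definition out_nbhd :: "'a set \<Rightarrow> ('a \<times> 'a) set \<Rightarrow> 'a set \<Rightarrow> 'a set" where
  "out_nbhd V A S = {x \<in> V - S. \<exists>y\<in>S. (y, x) \<in> A}"

definition scc :: "'a set \<Rightarrow> ('a \<times> 'a) set \<Rightarrow> 'a set \<Rightarrow> bool" where
  "scc V A S \<longleftrightarrow> (\<exists>u\<in>V. S = {w \<in> V. (u, w) \<in> A\<^sup>* \<and> (w, u) \<in> A\<^sup>*})"

definition source_set :: "'a set \<Rightarrow> ('a \<times> 'a) set \<Rightarrow> 'a set \<Rightarrow> bool" where
  "source_set V A S \<longleftrightarrow> scc V A S \<and> in_nbhd V A S = {}"

definition sink_set :: "'a set \<Rightarrow> ('a \<times> 'a) set \<Rightarrow> 'a set \<Rightarrow> bool" where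
  "sink_set V A S \<longleftrightarrow> scc V A S \<and> out_nbhd V A S = {}"

definition dpath :: "('a \<times> 'a) set \<Rightarrow> 'a \<Rightarrow> 'a \<Rightarrow> 'a list \<Rightarrow> bool" where
  "dpath A u v p \<longleftrightarrow> p \<noteq> [] \<and> hd p = u \<and> last p = v \<and> distinct p \<and>
     (\<forall>i. Suc i < length p \<longrightarrow> (p ! i, p ! Suc i) \<in> A)"

definition shortest_dpath :: "('a \<times> 'a) set \<Rightarrow> 'a \<Rightarrow> 'a \<Rightarrow> 'a list \<Rightarrow> bool" where
  "shortest_dpath A u v p \<longleftrightarrow> dpath A u v p \<and> (\<forall>q. dpath A u v q \<longrightarrow> length p \<le> length q)"

definition interval :: "('a \<times> 'a) set \<Rightarrow> 'a \<Rightarrow> 'a \<Rightarrow> 'a set" where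
  "interval A u v = {x. \<exists>p. shortest_dpath A u v p \<and> x \<in> set p}"

definition interval_set :: "('a \<times> 'a) set \<Rightarrow> 'a set \<Rightarrow> 'a set" where
  "interval_set A S = (\<Union>u\<in>S. \<Union>v\<in>S. interval A u v \<union> interval A v u)"

definition geodetic :: "'a set \<Rightarrow> ('a \<times> 'a) set \<Rightarrow> 'a set \<Rightarrow> bool" where
  "geodetic V A S \<longleftrightarrow> S \<subseteq> V \<and> interval_set A S = V"

end

theory Submission
  imports Defs "HOL-Library.Transitive_Closure_Table"
begin

text \<open>
  Minimality: a leaf can only be an end of a directed path, and a directed path through a
  source (sink) set starts (ends) in it; so every geodetic set contains all leaves and meets
  every leafless source and sink set, and these sets are pairwise disjoint strong components.

  Geodeticity: in a ditree a directed path is the only one between its ends, hence shortest,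
  so it suffices to put every vertex \<open>x \<notin> M\<close> on a directed path between two vertices of
  \<open>M\<close>. A nonempty set of vertices closed under predecessors contains a source set and hence a
  vertex of \<open>M\<close>. Applied to the ancestors of \<open>x\<close>, or to the part of the tree behind a
  neighbour of \<open>x\<close>, this gives neighbours \<open>a \<noteq> b\<close> with arcs \<open>a \<rightarrow> x \<rightarrow> b\<close>, a path from
  \<open>M\<close> to \<open>a\<close> and a path from \<open>b\<close> to \<open>M\<close>, each inside its own branch at \<open>x\<close>, and these
  join through \<open>x\<close>. Neighbours joined to \<open>x\<close> by a 2-cycle are handled by induction on the
  size of their branch.
\<close>

lemma rtrancl_obtain_distinct_path:
  assumes "(x, y) \<in> R\<^sup>*"
  obtains p where "p \<noteq> []" "hd p = x" "last p = y" "distinct p"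
    "successively (\<lambda>a b. (a, b) \<in> R) p"
proof -
  have "(\<lambda>a b. (a, b) \<in> R)\<^sup>*\<^sup>* x y" using assms by (simp add: rtranclp_rtrancl_eq)
  then obtain xs where "rtrancl_path (\<lambda>a b. (a, b) \<in> R) x xs y" "distinct (x # xs)"
    using rtranclp_eq_rtrancl_path rtrancl_path_distinct by metis
  moreover have "rtrancl_path r x xs y \<Longrightarrow> successively r (x # xs) \<and> last (x # xs) = y"
    for r :: "'a \<Rightarrow> 'a \<Rightarrow> bool" and xs
    by (induction rule: rtrancl_path.induct) (auto simp: successively_Cons)
  ultimately show ?thesis using that[of "x # xs"] by fastforce
qed

lemma successively_rtrancl_through:
  "successively (\<lambda>a b. (a, b) \<in> R) p \<Longrightarrow> y \<in> set p \<Longrightarrow>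
     (hd p, y) \<in> R\<^sup>* \<and> (y, last p) \<in> R\<^sup>*"
  by (induction p arbitrary: y rule: induct_list012) (auto intro: converse_rtrancl_into_rtrancl)

lemma dpath_iff_successively:
  "dpath A u w p \<longleftrightarrow>
     p \<noteq> [] \<and> hd p = u \<and> last p = w \<and> distinct p \<and> successively (\<lambda>a b. (a, b) \<in> A) p"
  by (auto simp: dpath_def successively_conv_nth)

lemma dpath_reaches:
  "dpath A u w p \<Longrightarrow> y \<in> set p \<Longrightarrow> (u, y) \<in> A\<^sup>* \<and> (y, w) \<in> A\<^sup>*"
  using successively_rtrancl_through by (fastforce simp: dpath_iff_successively)

lemma dpath_split_at_inner_vertex:
  assumes p: "dpath A u w p" and yp: "y \<in> set p" and "y \<noteq> u" "y \<noteq> w"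
  obtains p1 p2 where "p = p1 @ y # p2" "p1 \<noteq> []" "p2 \<noteq> []" "hd p1 = u" "last p2 = w"
    "successively (\<lambda>a b. (a, b) \<in> A) p1" "successively (\<lambda>a b. (a, b) \<in> A) p2"
    "(last p1, y) \<in> A" "(y, hd p2) \<in> A" "set p1 \<inter> set p2 = {}" "y \<notin> set p1" "y \<notin> set p2"
proof -
  obtain p1 p2 where pp: "p = p1 @ y # p2" using split_list[OF yp] by blast
  have ne: "p1 \<noteq> []" "p2 \<noteq> []" using p pp assms(3,4) by (auto simp: dpath_iff_successively)
  have sp: "successively (\<lambda>a b. (a, b) \<in> A) (p1 @ y # p2)" and dp: "distinct (p1 @ y # p2)"
    using p unfolding pp dpath_iff_successively by simp_all
  have "hd p1 = u" "last p2 = w" using p pp ne by (auto simp: dpath_iff_successively)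
  moreover have "successively (\<lambda>a b. (a, b) \<in> A) p1" "(last p1, y) \<in> A"
    "successively (\<lambda>a b. (a, b) \<in> A) p2" "(y, hd p2) \<in> A"
    using sp ne by (auto simp: successively_append_iff successively_Cons split: list.splits)
  moreover have "set p1 \<inter> set p2 = {}" "y \<notin> set p1" "y \<notin> set p2" using dp by auto
  ultimately show ?thesis using that pp ne by blast
qed

definition arcs_avoiding :: "('a \<times> 'a) set \<Rightarrow> 'a \<Rightarrow> ('a \<times> 'a) set" where
  "arcs_avoiding A c = {(a, b) \<in> A. a \<noteq> c \<and> b \<noteq> c}"

lemma rtrancl_last_arc_avoiding:
  assumes "(u, x) \<in> A\<^sup>*" "u \<noteq> x"
  shows "\<exists>a. (a, x) \<in> A \<and> (u, a) \<in> (arcs_avoiding A x)\<^sup>*"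
  using assms
proof (induction rule: converse_rtrancl_induct)
  case (step u z)
  show ?case
  proof (cases "z = x")
    case False
    then obtain a where "(a, x) \<in> A" "(z, a) \<in> (arcs_avoiding A x)\<^sup>*"
      using step by blast
    moreover have "(u, z) \<in> arcs_avoiding A x" using step(1,4) False by (simp add: arcs_avoiding_def)
    ultimately show ?thesis by (blast intro: converse_rtrancl_into_rtrancl)
  qed (use step in blast)
qed simp

lemma digraph_reachable_in_V:
  assumes "digraph V A" "(u, y) \<in> A\<^sup>*" "u \<in> V"
  shows "y \<in> V"
  using assms(2,3,1) by (induction rule: rtrancl_induct) (auto simp: digraph_def)

lemma digraph_reaching_in_V:
  assumes "digraph V A" "(y, u) \<in> A\<^sup>*" "u \<in> V"
  shows "y \<in> V"
  using assms(2,3,1) by (induction rule: converse_rtrancl_induct) (auto simp: digraph_def)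

lemma uadj_sym: "uadj A a b \<longleftrightarrow> uadj A b a"
  by (auto simp: uadj_def)

lemma uadj_in_V: "digraph V A \<Longrightarrow> uadj A a b \<Longrightarrow> a \<in> V \<and> b \<in> V \<and> a \<noteq> b"
  by (auto simp: uadj_def digraph_def)

lemma non_leaf_other_neighbour:
  assumes "digraph V A" "c \<in> V" "\<not> leaf V A c" "uadj A c p"
  obtains d where "uadj A c d" "d \<noteq> p"
proof -
  have "p \<in> V" using uadj_in_V[OF assms(1,4)] by simp
  then have "{w \<in> V. uadj A c w} \<noteq> {p}" using assms(2,3) by (auto simp: leaf_def)
  then show ?thesis using that \<open>p \<in> V\<close> assms(4) by blast
qed

lemma scc_subset_V: "scc V A S \<Longrightarrow> S \<subseteq> V"
  by (auto simp: scc_def)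

lemma scc_unique:
  assumes "scc V A S" "scc V A S'" "x \<in> S" "x \<in> S'"
  shows "S = S'"
proof -
  have "S = {w \<in> V. (x, w) \<in> A\<^sup>* \<and> (w, x) \<in> A\<^sup>*}" if sc: "scc V A S" and xS: "x \<in> S" for S
  proof -
    obtain u where "S = {w \<in> V. (u, w) \<in> A\<^sup>* \<and> (w, u) \<in> A\<^sup>*}" using sc unfolding scc_def by blast
    then show ?thesis using xS by (blast intro: rtrancl_trans)
  qed
  then show ?thesis using assms by blast
qed

lemma source_set_ancestor_closed:
  assumes dg: "digraph V A" and S: "source_set V A S" and z: "z \<in> S" and uz: "(u, z) \<in> A\<^sup>*"
  shows "u \<in> S"
  using uz
proof (induction rule: converse_rtrancl_induct)
  case (step a b)
  have "a \<in> V" using step.hyps(1) dg by (auto simp: digraph_def)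
  then show ?case using S step by (auto simp: source_set_def in_nbhd_def)
qed (fact z)

lemma source_set_within_pred_closed:
  assumes dg: "digraph V A" and QV: "Q \<subseteq> V" and q: "q \<in> Q"
    and closed: "A\<inverse> `` Q \<subseteq> Q"
  obtains S where "source_set V A S" "S \<subseteq> Q"
proof -
  define anc where "anc u = {z. (z, u) \<in> A\<^sup>*}" for u
  have anc_Q: "anc u \<subseteq> Q" if "u \<in> Q" for u
  proof
    fix z assume "z \<in> anc u"
    then have "(z, u) \<in> A\<^sup>*" by (simp add: anc_def)
    then show "z \<in> Q" using that closed by (induction rule: converse_rtrancl_induct) blast+
  qed
  have fin: "finite (anc u)" if "u \<in> Q" for u
    using finite_subset[OF subset_trans[OF anc_Q[OF that] QV]] dg by (simp add: digraph_def)
  obtain u where u: "u \<in> Q" "\<And>v. v \<in> Q \<Longrightarrow> card (anc u) \<le> card (anc v)"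
    using ex_has_least_nat[of "\<lambda>v. v \<in> Q" q "\<lambda>v. card (anc v)"] q by blast
  \<comment> \<open>\<open>u\<close> has the fewest ancestors, so every ancestor of \<open>u\<close> is reachable from \<open>u\<close>.\<close>
  have minimal: "(u, z) \<in> A\<^sup>*" if "(z, u) \<in> A\<^sup>*" for z
  proof -
    have zQ: "z \<in> Q" using anc_Q[OF u(1)] that by (auto simp: anc_def)
    have sub: "anc z \<subseteq> anc u" using that by (auto simp: anc_def)
    then have "anc z = anc u" using card_subset_eq[OF fin[OF u(1)] sub] u(2)[OF zQ]
      card_mono[OF fin[OF u(1)] sub] by linarith
    then show ?thesis by (auto simp: anc_def)
  qed
  define S where "S = {w \<in> V. (u, w) \<in> A\<^sup>* \<and> (w, u) \<in> A\<^sup>*}"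
  have "scc V A S" using u(1) QV unfolding scc_def S_def by blast
  moreover have "in_nbhd V A S = {}"
  proof -
    have "x \<in> S" if "x \<in> V" "(x, y) \<in> A" "y \<in> S" for x y
    proof -
      have "(x, u) \<in> A\<^sup>*" using that(2,3) by (auto simp: S_def intro: converse_rtrancl_into_rtrancl)
      then show ?thesis using minimal that(1) by (simp add: S_def)
    qed
    then show ?thesis by (auto simp: in_nbhd_def)
  qed
  moreover have "S \<subseteq> Q" using anc_Q[OF u(1)] by (auto simp: S_def anc_def)
  ultimately show ?thesis using that by (simp add: source_set_def)
qed

lemma arcs_avoiding_converse [simp]: "arcs_avoiding (A\<inverse>) c = (arcs_avoiding A c)\<inverse>"
  by (auto simp: arcs_avoiding_def)

lemma uadj_converse [simp]: "uadj (A\<inverse>) = uadj A"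
  by (auto simp: uadj_def fun_eq_iff)

lemma digraph_converse [simp]: "digraph V (A\<inverse>) = digraph V A"
  by (auto simp: digraph_def)

lemma ditree_converse [simp]: "ditree V (A\<inverse>) = ditree V A"
  by (simp add: ditree_def uconnected_def ucycle_def)

lemma leaves_converse [simp]: "leaves V (A\<inverse>) = leaves V A"
  by (simp add: leaves_def leaf_def)

lemma scc_converse [simp]: "scc V (A\<inverse>) S = scc V A S"
  by (auto simp: scc_def rtrancl_converse)

lemma source_set_converse [simp]: "source_set V (A\<inverse>) S = sink_set V A S"
  by (auto simp: source_set_def sink_set_def in_nbhd_def out_nbhd_def)

lemma sink_set_converse [simp]: "sink_set V (A\<inverse>) S = source_set V A S"
  by (auto simp: source_set_def sink_set_def in_nbhd_def out_nbhd_def)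

lemma sink_set_descendant_closed:
  assumes "digraph V A" "sink_set V A S" "z \<in> S" "(z, v) \<in> A\<^sup>*"
  shows "v \<in> S"
  using source_set_ancestor_closed[of V "A\<inverse>" S z v] assms by (simp add: rtrancl_converse)

section \<open>Branches of a ditree\<close>

definition edges_avoiding :: "('a \<times> 'a) set \<Rightarrow> 'a \<Rightarrow> ('a \<times> 'a) set" where
  "edges_avoiding A c = {(a, b). uadj A a b \<and> a \<noteq> c \<and> b \<noteq> c}"

definition branch :: "('a \<times> 'a) set \<Rightarrow> 'a \<Rightarrow> 'a \<Rightarrow> 'a set" where
  "branch A c d = {y. (d, y) \<in> (edges_avoiding A c)\<^sup>*}"

lemma branch_self: "d \<in> branch A c d"
  by (simp add: branch_def)

lemma edges_avoiding_rtrancl_sym: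
  "(a, b) \<in> (edges_avoiding A c)\<^sup>* \<Longrightarrow> (b, a) \<in> (edges_avoiding A c)\<^sup>*"
  using sym_rtrancl[of "edges_avoiding A c"]
  by (auto simp: sym_def edges_avoiding_def uadj_def)

lemma branch_closed:
  "(a, b) \<in> (edges_avoiding A c)\<^sup>* \<Longrightarrow> a \<in> branch A c d \<Longrightarrow> b \<in> branch A c d"
  by (auto simp: branch_def)

lemma arcs_avoiding_rtrancl_in_branch:
  assumes "(a, b) \<in> (arcs_avoiding A c)\<^sup>*"
  shows "a \<in> branch A c b" and "b \<in> branch A c a"
proof -
  have "arcs_avoiding A c \<subseteq> edges_avoiding A c"
    unfolding arcs_avoiding_def edges_avoiding_def uadj_def by blast
  then have "(a, b) \<in> (edges_avoiding A c)\<^sup>*" using assms rtrancl_mono by blast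
  then show "a \<in> branch A c b" "b \<in> branch A c a"
    using edges_avoiding_rtrancl_sym by (simp_all add: branch_def)
qed

lemma center_notin_branch:
  assumes "d \<noteq> c"
  shows "c \<notin> branch A c d"
proof
  assume "c \<in> branch A c d"
  then have "(d, c) \<in> (edges_avoiding A c)\<^sup>*" by (simp add: branch_def)
  then show False using assms by (cases rule: rtranclE) (auto simp: edges_avoiding_def)
qed

lemma branch_subset_V:
  assumes "digraph V A" "d \<in> V"
  shows "branch A c d \<subseteq> V"
proof
  fix y assume "y \<in> branch A c d"
  then have "(d, y) \<in> (edges_avoiding A c)\<^sup>*" by (simp add: branch_def)
  then show "y \<in> V"
  proof (induction rule: rtrancl_induct)
    case (step y z)
    then have "uadj A y z" by (simp add: edges_avoiding_def)
    then show ?case using uadj_in_V[OF assms(1)] by blast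
  qed (fact assms(2))
qed

lemma ditree_no_bypass:
  assumes T: "ditree V A" and cd: "uadj A c d" and cy: "uadj A c y" and dy: "d \<noteq> y"
  shows "y \<notin> branch A c d"
proof
  assume "y \<in> branch A c d"
  then have "(d, y) \<in> (edges_avoiding A c)\<^sup>*" by (simp add: branch_def)
  then obtain p where p: "p \<noteq> []" "hd p = d" "last p = y" "distinct p"
    "successively (\<lambda>a b. (a, b) \<in> edges_avoiding A c) p"
    by (rule rtrancl_obtain_distinct_path)
  have dg: "digraph V A" using T by (simp add: ditree_def)
  have c: "c \<in> V" "c \<noteq> d" and dV: "d \<in> V" using uadj_in_V[OF dg cd] by auto
  have in_branch: "set p \<subseteq> branch A c d"
    using successively_rtrancl_through[OF p(5)] p(2) by (auto simp: branch_def)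
  have "ucycle V A (c # p)"
    unfolding ucycle_def
  proof (intro conjI allI impI)
    have "length p \<noteq> 1" using p(1-3) dy by (cases p) auto
    moreover have "length p \<noteq> 0" using p(1) by simp
    ultimately show "3 \<le> length (c # p)" by (simp only: length_Cons)
    show "distinct (c # p)" using p(4) in_branch center_notin_branch[OF c(2)[symmetric]] by auto
    show "set (c # p) \<subseteq> V" using in_branch branch_subset_V[OF dg dV] c(1) by auto
  next
    fix i assume i: "i < length (c # p)"
    consider "i = 0" | "i = length p" | j where "i = Suc j" "Suc j < length p"
      using i by (cases i) (auto dest: Suc_lessI)
    then show "uadj A ((c # p) ! i) ((c # p) ! ((i + 1) mod length (c # p)))"
    proof cases
      case 1
      then show ?thesis using cd p(1,2) by (cases p) auto
    next
      case 2
      then show ?thesis using cy p(1,3) by (simp add: last_conv_nth uadj_sym)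
    next
      case 3
      then show ?thesis using successively_nth[OF p(5)] by (simp add: edges_avoiding_def)
    qed
  qed
  then show False using T by (auto simp: ditree_def)
qed

lemma branches_disjoint:
  assumes "ditree V A" "uadj A c d1" "uadj A c d2" "d1 \<noteq> d2"
  shows "branch A c d1 \<inter> branch A c d2 = {}"
proof -
  have "d2 \<in> branch A c d1" if "y \<in> branch A c d1" "y \<in> branch A c d2" for y
  proof -
    have "(y, d2) \<in> (edges_avoiding A c)\<^sup>*"
      using that(2) edges_avoiding_rtrancl_sym by (simp add: branch_def)
    from branch_closed[OF this that(1)] show ?thesis .
  qed
  then show ?thesis using ditree_no_bypass[OF assms] by blast
qed

lemma edges_avoiding_rtrancl_recentre:
  assumes "(a, b) \<in> (edges_avoiding A c)\<^sup>*" "q \<notin> branch A c a"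
  shows "(a, b) \<in> (edges_avoiding A q)\<^sup>*"
  using assms
proof (induction rule: rtrancl_induct)
  case (step y z)
  have "y \<in> branch A c a" "z \<in> branch A c a"
    using step.hyps rtrancl_into_rtrancl[OF step.hyps] by (simp_all add: branch_def)
  then have "(y, z) \<in> edges_avoiding A q"
    using step.hyps(2) step.prems by (auto simp: edges_avoiding_def)
  with step.IH[OF step.prems] show ?case by (rule rtrancl_into_rtrancl)
qed simp

lemma arcs_avoiding_rtrancl_recentre:
  assumes "(a, b) \<in> (arcs_avoiding A c)\<^sup>*" "q \<notin> branch A c b"
  shows "(a, b) \<in> (arcs_avoiding A q)\<^sup>*"
  using assms
proof (induction rule: converse_rtrancl_induct)
  case (step y z)
  have "(y, b) \<in> (arcs_avoiding A c)\<^sup>*" using step.hyps by (rule converse_rtrancl_into_rtrancl)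
  then have "y \<in> branch A c b" by (rule arcs_avoiding_rtrancl_in_branch(1))
  moreover have "z \<in> branch A c b" using step.hyps(2) by (rule arcs_avoiding_rtrancl_in_branch(1))
  ultimately have "(y, z) \<in> arcs_avoiding A q"
    using step.hyps(1) step.prems by (auto simp: arcs_avoiding_def)
  then show ?case using step.IH[OF step.prems] by (rule converse_rtrancl_into_rtrancl)
qed simp

lemma branch_psubset:
  assumes T: "ditree V A" and pc: "uadj A p c" and cd: "uadj A c d" and dp: "d \<noteq> p"
  shows "branch A c d \<subset> branch A p c"
proof -
  have dg: "digraph V A" using T by (simp add: ditree_def)
  have "uadj A c p" using pc by (simp add: uadj_sym)
  then have p_notin: "p \<notin> branch A c d" using ditree_no_bypass[OF T cd _ dp] by blast
  have "(c, d) \<in> edges_avoiding A p"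
    using cd dp uadj_in_V[OF dg pc] by (auto simp: edges_avoiding_def)
  then have "branch A c d \<subseteq> branch A p c"
    using edges_avoiding_rtrancl_recentre[OF _ p_notin]
    by (auto simp: branch_def intro: converse_rtrancl_into_rtrancl)
  moreover have "c \<notin> branch A c d" using uadj_in_V[OF dg cd] center_notin_branch by metis
  ultimately show ?thesis using branch_self[of c A p] by blast
qed

lemma dpath_segment_avoiding:
  assumes "successively (\<lambda>a b. (a, b) \<in> A) l" "l \<noteq> []" "y \<notin> set l"
  shows "(hd l, last l) \<in> (edges_avoiding A y)\<^sup>*"
proof -
  have "successively (\<lambda>a b. (a, b) \<in> edges_avoiding A y) l"
    by (rule successively_mono[OF assms(1)]) (use assms(3) in \<open>auto simp: edges_avoiding_def uadj_def\<close>)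
  from successively_rtrancl_through[OF this last_in_set[OF assms(2)]] show ?thesis by blast
qed

lemma ditree_dpath_subset:
  assumes T: "ditree V A" and p: "dpath A u w p" and q: "dpath A u w q"
  shows "set p \<subseteq> set q"
proof
  fix y assume yp: "y \<in> set p"
  show "y \<in> set q"
  proof (rule ccontr)
    assume yq: "y \<notin> set q"
    have q': "q \<noteq> []" "hd q = u" "last q = w" "successively (\<lambda>a b. (a, b) \<in> A) q"
      using q by (auto simp: dpath_iff_successively)
    then have "y \<noteq> u" "y \<noteq> w" using yq hd_in_set[OF q'(1)] last_in_set[OF q'(1)] by auto
    then obtain p1 p2 where pp: "p = p1 @ y # p2" "p1 \<noteq> []" "p2 \<noteq> []" "hd p1 = u" "last p2 = w"
      "successively (\<lambda>a b. (a, b) \<in> A) p1" "successively (\<lambda>a b. (a, b) \<in> A) p2"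
      "(last p1, y) \<in> A" "(y, hd p2) \<in> A" "set p1 \<inter> set p2 = {}" "y \<notin> set p1" "y \<notin> set p2"
      using dpath_split_at_inner_vertex[OF p yp] by blast
    have ab: "last p1 \<noteq> hd p2" using pp(10) last_in_set[OF pp(2)] hd_in_set[OF pp(3)] by auto
    \<comment> \<open>Going back along \<open>p\<close> to \<open>u\<close>, along \<open>q\<close> to \<open>w\<close> and back along \<open>p\<close> avoids \<open>y\<close>.\<close>
    have "(hd p1, last p1) \<in> (edges_avoiding A y)\<^sup>*"
      using dpath_segment_avoiding[OF pp(6,2,11)] .
    moreover have "(hd p2, last p2) \<in> (edges_avoiding A y)\<^sup>*"
      using dpath_segment_avoiding[OF pp(7,3,12)] .
    moreover have "(u, w) \<in> (edges_avoiding A y)\<^sup>*"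
      using dpath_segment_avoiding[OF q'(4,1) yq] q'(2,3) by simp
    ultimately have "(last p1, hd p2) \<in> (edges_avoiding A y)\<^sup>*"
      using pp(4,5) edges_avoiding_rtrancl_sym rtrancl_trans[of "last p1" u] rtrancl_trans[of _ w]
      by metis
    then have "hd p2 \<in> branch A y (last p1)" by (simp add: branch_def)
    moreover have "uadj A y (last p1)" "uadj A y (hd p2)" using pp(8,9) by (auto simp: uadj_def)
    ultimately show False using ditree_no_bypass[OF T _ _ ab] by blast
  qed
qed

lemma ditree_dpath_shortest:
  assumes "ditree V A" "dpath A u w p"
  shows "shortest_dpath A u w p"
  unfolding shortest_dpath_def
proof (intro conjI allI impI)
  fix q assume q: "dpath A u w q"
  have "length p = card (set p)" using assms(2) by (simp add: dpath_def distinct_card)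
  also have "\<dots> \<le> card (set q)" using ditree_dpath_subset[OF assms q] by (simp add: card_mono)
  also have "\<dots> = length q" using q by (simp add: dpath_def distinct_card)
  finally show "length p \<le> length q" .
qed (fact assms(2))

section \<open>Geodeticity\<close>

definition leafless_end_sets :: "'a set \<Rightarrow> ('a \<times> 'a) set \<Rightarrow> 'a set set" where
  "leafless_end_sets V A = {S. (source_set V A S \<or> sink_set V A S) \<and> S \<inter> leaves V A = {}}"

lemma leafless_end_set_scc: "S \<in> leafless_end_sets V A \<Longrightarrow> scc V A S"
  by (auto simp: leafless_end_sets_def source_set_def sink_set_def)

definition hits_ends :: "'a set \<Rightarrow> ('a \<times> 'a) set \<Rightarrow> 'a set \<Rightarrow> bool" where
  "hits_ends V A M \<longleftrightarrow> leaves V A \<subseteq> M \<and> (\<forall>S \<in> leafless_end_sets V A. S \<inter> M \<noteq> {})"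

lemma hits_ends_converse [simp]: "hits_ends V (A\<inverse>) M = hits_ends V A M"
  by (auto simp: hits_ends_def leafless_end_sets_def)

lemma hits_ends_meets_pred_closed:
  assumes dg: "digraph V A" and H: "hits_ends V A M" and QV: "Q \<subseteq> V" and q: "q \<in> Q"
    and closed: "A\<inverse> `` Q \<subseteq> Q"
  shows "Q \<inter> M \<noteq> {}"
proof -
  obtain S where S: "source_set V A S" "S \<subseteq> Q"
    using source_set_within_pred_closed[OF dg QV q closed] by blast
  show ?thesis
  proof (cases "S \<inter> leaves V A = {}")
    case True
    then have "S \<in> leafless_end_sets V A" using S(1) by (simp add: leafless_end_sets_def)
    then have "S \<inter> M \<noteq> {}" using H by (simp add: hits_ends_def)
    then show ?thesis using S(2) by blast
  next
    case False
    then show ?thesis using H S(2) by (auto simp: hits_ends_def)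
  qed
qed

definition in_port :: "('a \<times> 'a) set \<Rightarrow> 'a set \<Rightarrow> 'a \<Rightarrow> 'a \<Rightarrow> bool" where
  "in_port A M x a \<longleftrightarrow> (a, x) \<in> A \<and> (\<exists>u\<in>M. (u, a) \<in> (arcs_avoiding A x)\<^sup>*)"

definition out_port :: "('a \<times> 'a) set \<Rightarrow> 'a set \<Rightarrow> 'a \<Rightarrow> 'a \<Rightarrow> bool" where
  "out_port A M x b \<longleftrightarrow> (x, b) \<in> A \<and> (\<exists>w\<in>M. (b, w) \<in> (arcs_avoiding A x)\<^sup>*)"

lemma in_port_converse [simp]: "in_port (A\<inverse>) M x a = out_port A M x a"
  by (auto simp: in_port_def out_port_def rtrancl_converse)

lemma in_port_exists:
  assumes dg: "digraph V A" and H: "hits_ends V A M" and xV: "x \<in> V" and xM: "x \<notin> M"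
  obtains a where "in_port A M x a"
proof -
  define Q where "Q = {y. (y, x) \<in> A\<^sup>*}"
  have "Q \<subseteq> V" using digraph_reaching_in_V[OF dg _ xV] by (auto simp: Q_def)
  moreover have "x \<in> Q" by (simp add: Q_def)
  moreover have "A\<inverse> `` Q \<subseteq> Q" unfolding Q_def by (blast intro: converse_rtrancl_into_rtrancl)
  ultimately have "Q \<inter> M \<noteq> {}" by (rule hits_ends_meets_pred_closed[OF dg H])
  then obtain u where u: "u \<in> M" "(u, x) \<in> A\<^sup>*" by (auto simp: Q_def)
  moreover have "u \<noteq> x" using u(1) xM by blast
  ultimately obtain a where "(a, x) \<in> A" "(u, a) \<in> (arcs_avoiding A x)\<^sup>*"
    using rtrancl_last_arc_avoiding by metis
  then show ?thesis using that u(1) by (auto simp: in_port_def)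
qed

lemma out_port_exists:
  assumes "digraph V A" "hits_ends V A M" "x \<in> V" "x \<notin> M"
  obtains b where "out_port A M x b"
proof -
  have "digraph V (A\<inverse>)" "hits_ends V (A\<inverse>) M" using assms(1,2) by simp_all
  then show ?thesis using in_port_exists[OF _ _ assms(3,4)] that by (metis in_port_converse)
qed

lemma in_port_of_one_way_arc:
  assumes T: "ditree V A" and H: "hits_ends V A M" and nx: "(n, x) \<in> A" and xn: "(x, n) \<notin> A"
  shows "in_port A M x n"
proof -
  have dg: "digraph V A" using T by (simp add: ditree_def)
  have xn_adj: "uadj A x n" using nx by (simp add: uadj_def)
  then have nV: "n \<in> V" and "n \<noteq> x" using uadj_in_V[OF dg] by auto
  define Q where "Q = {y. (y, n) \<in> (arcs_avoiding A x)\<^sup>*}"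
  have Q_branch: "Q \<subseteq> branch A x n"
    using arcs_avoiding_rtrancl_in_branch(1) by (auto simp: Q_def)
  have "x \<notin> Q" using Q_branch center_notin_branch[OF \<open>n \<noteq> x\<close>] by blast
  have "z \<in> Q" if zy: "(z, y) \<in> A" "y \<in> Q" for z y
  proof (cases "z = x")
    case True
    then have "y = n"
      using ditree_no_bypass[OF T xn_adj, of y] zy Q_branch by (auto simp: uadj_def)
    then show ?thesis using True zy(1) xn by simp
  next
    case False
    then have "(z, y) \<in> arcs_avoiding A x"
      using zy \<open>x \<notin> Q\<close> by (auto simp: arcs_avoiding_def)
    then show ?thesis using zy(2) by (auto simp: Q_def intro: converse_rtrancl_into_rtrancl)
  qed
  then have "A\<inverse> `` Q \<subseteq> Q" by blast
  moreover have "Q \<subseteq> V" using Q_branch branch_subset_V[OF dg nV] by blast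
  moreover have "n \<in> Q" by (simp add: Q_def)
  ultimately have "Q \<inter> M \<noteq> {}" using hits_ends_meets_pred_closed[OF dg H] by blast
  then show ?thesis using nx by (auto simp: in_port_def Q_def)
qed

lemma out_port_of_one_way_arc:
  assumes "ditree V A" "hits_ends V A M" "(x, n) \<in> A" "(n, x) \<notin> A"
  shows "out_port A M x n"
  using in_port_of_one_way_arc[of V "A\<inverse>"] assms by simp

lemma in_port_extend:
  assumes T: "ditree V A" and port: "in_port A M n d" and nx: "(n, x) \<in> A" and xd: "x \<noteq> d"
  shows "in_port A M x n"
proof -
  have dg: "digraph V A" using T by (simp add: ditree_def)
  obtain u where u: "u \<in> M" "(u, d) \<in> (arcs_avoiding A n)\<^sup>*" and dn: "(d, n) \<in> A"
    using port by (auto simp: in_port_def)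
  have "x \<notin> branch A n d"
    using ditree_no_bypass[OF T _ _ xd[symmetric]] dn nx by (simp add: uadj_def)
  then have "(u, d) \<in> (arcs_avoiding A x)\<^sup>*"
    using arcs_avoiding_rtrancl_recentre[OF u(2)] by blast
  moreover have "(d, n) \<in> arcs_avoiding A x"
    using dn xd nx dg by (auto simp: arcs_avoiding_def digraph_def)
  ultimately have "(u, n) \<in> (arcs_avoiding A x)\<^sup>*" by (rule rtrancl_into_rtrancl)
  then show ?thesis using u(1) nx by (auto simp: in_port_def)
qed

lemma out_port_extend:
  assumes "ditree V A" "out_port A M n d" "(x, n) \<in> A" "x \<noteq> d"
  shows "out_port A M x n"
  using in_port_extend[of V "A\<inverse>"] assms by simp

lemma neighbour_is_port:
  assumes T: "ditree V A" and H: "hits_ends V A M" and "uadj A x n"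
  shows "in_port A M x n \<or> out_port A M x n"
  using assms(3)
proof (induction "card (branch A x n)" arbitrary: x n rule: less_induct)
  case less
  have dg: "digraph V A" using T by (simp add: ditree_def)
  consider "(n, x) \<in> A" "(x, n) \<notin> A" | "(x, n) \<in> A" "(n, x) \<notin> A"
    | (two_cycle) "(n, x) \<in> A" "(x, n) \<in> A"
    using less.prems by (auto simp: uadj_def)
  then show ?case
  proof cases
    case two_cycle
    show ?thesis
    proof (cases "n \<in> M")
      case True
      then show ?thesis using two_cycle by (auto simp: in_port_def)
    next
      case False
      have nx: "uadj A n x" using less.prems by (simp add: uadj_sym)
      have nV: "n \<in> V" using uadj_in_V[OF dg nx] by simp
      have "\<not> leaf V A n" using False H by (auto simp: hits_ends_def leaves_def)
      then obtain d where nd: "uadj A n d" and "d \<noteq> x"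
        using non_leaf_other_neighbour[OF dg nV _ nx] by blast
      have "finite (branch A x n)"
        using finite_subset[OF branch_subset_V[OF dg nV]] dg by (simp add: digraph_def)
      then have "card (branch A n d) < card (branch A x n)"
        by (rule psubset_card_mono[OF _ branch_psubset[OF T less.prems nd \<open>d \<noteq> x\<close>]])
      then have "in_port A M n d \<or> out_port A M n d" using less.hyps nd by blast
      then show ?thesis
        using in_port_extend[OF T _ two_cycle(1) \<open>d \<noteq> x\<close>[symmetric]]
          out_port_extend[OF T _ two_cycle(2) \<open>d \<noteq> x\<close>[symmetric]] by blast
    qed
  next
    case 1
    then show ?thesis using in_port_of_one_way_arc[OF T H] by simp
  next
    case 2
    then show ?thesis using out_port_of_one_way_arc[OF T H] by simp
  qed
qed

lemma dpath_through_ports: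
  assumes T: "ditree V A" and a: "in_port A M x a" and b: "out_port A M x b" and ab: "a \<noteq> b"
  shows "\<exists>u\<in>M. \<exists>w\<in>M. \<exists>p. dpath A u w p \<and> x \<in> set p"
proof -
  have dg: "digraph V A" using T by (simp add: ditree_def)
  obtain u where u: "u \<in> M" "(u, a) \<in> (arcs_avoiding A x)\<^sup>*" and ax: "(a, x) \<in> A"
    using a by (auto simp: in_port_def)
  obtain w where w: "w \<in> M" "(b, w) \<in> (arcs_avoiding A x)\<^sup>*" and xb: "(x, b) \<in> A"
    using b by (auto simp: out_port_def)
  obtain p1 where p1: "p1 \<noteq> []" "hd p1 = u" "last p1 = a" "distinct p1"
    "successively (\<lambda>a b. (a, b) \<in> arcs_avoiding A x) p1"
    using rtrancl_obtain_distinct_path[OF u(2)] by blast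
  obtain p2 where p2: "p2 \<noteq> []" "hd p2 = b" "last p2 = w" "distinct p2"
    "successively (\<lambda>a b. (a, b) \<in> arcs_avoiding A x) p2"
    using rtrancl_obtain_distinct_path[OF w(2)] by blast
  have xa_adj: "uadj A x a" and xb_adj: "uadj A x b" using ax xb by (auto simp: uadj_def)
  have p1_branch: "set p1 \<subseteq> branch A x a"
  proof
    fix y assume "y \<in> set p1"
    then have "(y, a) \<in> (arcs_avoiding A x)\<^sup>*"
      using successively_rtrancl_through[OF p1(5)] p1(3) by simp
    then show "y \<in> branch A x a" by (rule arcs_avoiding_rtrancl_in_branch)
  qed
  have p2_branch: "set p2 \<subseteq> branch A x b"
  proof
    fix y assume "y \<in> set p2"
    then have "(b, y) \<in> (arcs_avoiding A x)\<^sup>*"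
      using successively_rtrancl_through[OF p2(5)] p2(2) by simp
    then show "y \<in> branch A x b" by (rule arcs_avoiding_rtrancl_in_branch)
  qed
  have "a \<noteq> x" "b \<noteq> x" using uadj_in_V[OF dg xa_adj] uadj_in_V[OF dg xb_adj] by auto
  then have "x \<notin> branch A x a" "x \<notin> branch A x b" by (simp_all add: center_notin_branch)
  moreover have "branch A x a \<inter> branch A x b = {}" by (rule branches_disjoint[OF T xa_adj xb_adj ab])
  ultimately have "distinct (p1 @ x # p2)" using p1(4) p2(4) p1_branch p2_branch by auto
  moreover have "successively (\<lambda>a b. (a, b) \<in> A) (p1 @ x # p2)"
  proof -
    have "successively (\<lambda>a b. (a, b) \<in> A) p1" "successively (\<lambda>a b. (a, b) \<in> A) p2"
      by (rule successively_mono[OF p1(5)] successively_mono[OF p2(5)], simp add: arcs_avoiding_def)+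
    then show ?thesis using p1(1,3) p2(1,2) ax xb
      by (cases p2) (auto simp: successively_append_iff)
  qed
  ultimately have "dpath A u w (p1 @ x # p2)"
    using p1(1,2) p2(1,3) by (simp add: dpath_iff_successively)
  moreover have "x \<in> set (p1 @ x # p2)" by simp
  ultimately show ?thesis using u(1) w(1) by blast
qed

lemma hits_ends_dpath_through:
  assumes T: "ditree V A" and H: "hits_ends V A M" and xV: "x \<in> V"
  shows "\<exists>u\<in>M. \<exists>w\<in>M. \<exists>p. dpath A u w p \<and> x \<in> set p"
proof (cases "x \<in> M")
  case True
  then show ?thesis by (intro bexI exI[of _ "[x]"]) (auto simp: dpath_def)
next
  case False
  have dg: "digraph V A" using T by (simp add: ditree_def)
  obtain a where a: "in_port A M x a" using in_port_exists[OF dg H xV False] .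
  obtain b where b: "out_port A M x b" using out_port_exists[OF dg H xV False] .
  show ?thesis
  proof (cases "a = b")
    case True
    \<comment> \<open>\<open>x\<close> is joined to \<open>a\<close> by a 2-cycle, so we look for a port at a second neighbour.\<close>
    have "\<not> leaf V A x" using False H by (auto simp: hits_ends_def leaves_def)
    moreover have "uadj A x a" using a by (auto simp: in_port_def uadj_def)
    ultimately obtain n where "uadj A x n" "n \<noteq> a"
      using non_leaf_other_neighbour[OF dg xV] by blast
    from neighbour_is_port[OF T H \<open>uadj A x n\<close>] show ?thesis
    proof
      assume "in_port A M x n"
      then show ?thesis using dpath_through_ports[OF T _ b] \<open>n \<noteq> a\<close> True by blast
    next
      assume "out_port A M x n"
      then show ?thesis using dpath_through_ports[OF T a _ \<open>n \<noteq> a\<close>[symmetric]] by blast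
    qed
  qed (use dpath_through_ports[OF T a b] in blast)
qed

lemma hits_ends_geodetic:
  assumes T: "ditree V A" and H: "hits_ends V A M" and MV: "M \<subseteq> V"
  shows "geodetic V A M"
  unfolding geodetic_def
proof (intro conjI equalityI subsetI)
  have dg: "digraph V A" using T by (simp add: ditree_def)
  fix x assume "x \<in> interval_set A M"
  then obtain u v p where u: "u \<in> M" and up: "dpath A u v p" "x \<in> set p"
    unfolding interval_set_def interval_def shortest_dpath_def by blast
  then have "(u, x) \<in> A\<^sup>*" using dpath_reaches[OF up] by blast
  then show "x \<in> V" using digraph_reachable_in_V[OF dg] u MV by blast
next
  fix x assume "x \<in> V"
  then obtain u w p where uw: "u \<in> M" "w \<in> M" and "dpath A u w p" "x \<in> set p"
    using hits_ends_dpath_through[OF T H] by blast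
  then have "x \<in> interval A u w"
    using ditree_dpath_shortest[OF T] unfolding interval_def by blast
  then show "x \<in> interval_set A M" using uw unfolding interval_set_def by blast
qed (use MV in blast)

section \<open>Minimality\<close>

lemma leaf_on_dpath_is_end:
  assumes dg: "digraph V A" and l: "leaf V A l" and p: "dpath A u v p" and lp: "l \<in> set p"
  shows "l = u \<or> l = v"
proof (rule ccontr)
  assume "\<not> (l = u \<or> l = v)"
  then obtain p1 p2 where pp: "p1 \<noteq> []" "p2 \<noteq> []" "(last p1, l) \<in> A" "(l, hd p2) \<in> A"
    "set p1 \<inter> set p2 = {}"
    using dpath_split_at_inner_vertex[OF p lp] by metis
  have "last p1 \<noteq> hd p2" using pp(5) last_in_set[OF pp(1)] hd_in_set[OF pp(2)] by auto
  moreover have "{last p1, hd p2} \<subseteq> {w \<in> V. uadj A l w}"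
    using pp(3,4) dg by (auto simp: uadj_def digraph_def)
  moreover have "finite {w \<in> V. uadj A l w}" using dg by (simp add: digraph_def)
  ultimately have "2 \<le> card {w \<in> V. uadj A l w}" by (metis card_2_iff card_mono)
  then show False using l by (simp add: leaf_def)
qed

lemma geodetic_hits_ends:
  assumes dg: "digraph V A" and G: "geodetic V A M"
  shows "hits_ends V A M"
proof -
  have on_path: "\<exists>u\<in>M. \<exists>v\<in>M. \<exists>p. dpath A u v p \<and> x \<in> set p" if "x \<in> V" for x
  proof -
    have "x \<in> interval_set A M" using G that by (simp add: geodetic_def)
    then show ?thesis unfolding interval_set_def interval_def shortest_dpath_def by blast
  qed
  show ?thesis
    unfolding hits_ends_def
  proof (intro conjI subsetI ballI)
    fix l assume "l \<in> leaves V A"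
    then have l: "leaf V A l" "l \<in> V" by (auto simp: leaves_def leaf_def)
    then show "l \<in> M" using on_path leaf_on_dpath_is_end[OF dg l(1)] by metis
  next
    fix S assume S: "S \<in> leafless_end_sets V A"
    then obtain z where z: "z \<in> S" using leafless_end_set_scc by (fastforce simp: scc_def)
    then obtain u v p where "u \<in> M" "v \<in> M" and up: "dpath A u v p" "z \<in> set p"
      using on_path scc_subset_V[OF leafless_end_set_scc[OF S]] by blast
    moreover have "(u, z) \<in> A\<^sup>*" "(z, v) \<in> A\<^sup>*" using dpath_reaches[OF up] by blast+
    ultimately show "S \<inter> M \<noteq> {}"
      using S source_set_ancestor_closed[OF dg _ z] sink_set_descendant_closed[OF dg _ z]
      by (auto simp: leafless_end_sets_def)
  qed
qed

lemma card_leaves_representatives_le: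
  assumes dg: "digraph V A" and H: "hits_ends V A M" and MV: "M \<subseteq> V"
  shows "card (leaves V A \<union> s ` leafless_end_sets V A) \<le> card M"
proof -
  let ?L = "leaves V A" and ?E = "leafless_end_sets V A"
  have finV: "finite V" using dg by (simp add: digraph_def)
  have finL: "finite ?L" using finV by (rule finite_subset[rotated]) (auto simp: leaves_def leaf_def)
  have "?E \<subseteq> Pow V" using scc_subset_V leafless_end_set_scc by blast
  then have finE: "finite ?E" using finV by (simp add: finite_subset)
  have "\<forall>S\<in>?E. \<exists>y. y \<in> S \<inter> M" using H by (auto simp: hits_ends_def)
  then obtain f where f: "\<And>S. S \<in> ?E \<Longrightarrow> f S \<in> S \<inter> M" by (metis bchoice)
  have inj: "inj_on f ?E"
  proof (rule inj_onI)
    fix S S' assume "S \<in> ?E" "S' \<in> ?E" "f S = f S'"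
    then show "S = S'"
      using scc_unique[OF leafless_end_set_scc leafless_end_set_scc] f by (metis IntD1)
  qed
  have disj: "?L \<inter> f ` ?E = {}" using f by (auto simp: leafless_end_sets_def)
  have "card (?L \<union> s ` ?E) \<le> card ?L + card (s ` ?E)" by (rule card_Un_le)
  also have "\<dots> \<le> card ?L + card ?E" using card_image_le[OF finE] by simp
  also have "\<dots> = card ?L + card (f ` ?E)" using card_image[OF inj] by simp
  also have "\<dots> = card (?L \<union> f ` ?E)" using card_Un_disjoint[OF finL finite_imageI[OF finE] disj] by simp
  also have "\<dots> \<le> card M"
    using H f by (intro card_mono[OF finite_subset[OF MV finV]]) (auto simp: hits_ends_def)
  finally show ?thesis .
qed

theorem lemma5:
  fixes V :: "'a set" and A :: "('a \<times> 'a) set" and s :: "'a set \<Rightarrow> 'a"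
  assumes "ditree V A"
    and "\<forall>S. (source_set V A S \<or> sink_set V A S) \<and> S \<inter> leaves V A = {} \<longrightarrow> s S \<in> S"
  defines "M \<equiv> leaves V A \<union>
             s ` {S. (source_set V A S \<or> sink_set V A S) \<and> S \<inter> leaves V A = {}}"
  shows "geodetic V A M \<and> (\<forall>M'. geodetic V A M' \<longrightarrow> card M \<le> card M')"
proof -
  have dg: "digraph V A" using assms(1) by (simp add: ditree_def)
  have M: "M = leaves V A \<union> s ` leafless_end_sets V A"
    by (simp add: M_def leafless_end_sets_def)
  have rep: "s S \<in> S" if "S \<in> leafless_end_sets V A" for S
    using assms(2) that by (simp add: leafless_end_sets_def)
  have "hits_ends V A M" unfolding hits_ends_def M using rep by blast
  moreover have "M \<subseteq> V"
  proof -
    have "S \<subseteq> V" if "S \<in> leafless_end_sets V A" for S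
      using scc_subset_V[OF leafless_end_set_scc[OF that]] .
    then show ?thesis unfolding M leaves_def leaf_def using rep by blast
  qed
  ultimately have "geodetic V A M" by (rule hits_ends_geodetic[OF assms(1)])
  moreover have "card M \<le> card M'" if "geodetic V A M'" for M'
    using card_leaves_representatives_le[OF dg geodetic_hits_ends[OF dg that]] that M
    by (simp add: geodetic_def)
  ultimately show ?thesis by blast
qed

end
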